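(* Fix $N\ge 2$, $\tau>0$, $\lambda>0$, $\mu\ge 0$ and $c\in\mathbb{R}$. Let $x_i,y_i$ ($i=1,\dots,N$) be the unit-norm embeddings by the labeled-data encoder $f_\theta$ of $N$ positive pairs, with $s^{\theta}_{ij}=\langle x_i,y_j\rangle$; let $z_i$ ($i=1,\dots,N$) be the unit-norm embeddings by the full-data encoder $g_\psi$ of a batch of $N$ molecules from the full dataset, with $s^{\psi}_{ij}=\langle z_i,z_j\rangle$; and let $u_i$ be the unit-norm embeddings of the same $N$ full-dataset molecules by $f_\theta$ with gradients detached, regarded as fixed vectors. Define the soft-label matrix $$\hat\Gamma=\arg\min_{\Gamma\in U(\mathbf 1_N,\mathbf 1_N)}\Big(\langle C^{fix},\Gamma\rangle+\frac{\lambda}{2}\|\Gamma\|_F^2\Big),\qquad C^{fix}_{ij}=c-\langle u_i,u_j\rangle,$$ and the losses $$\mathcal{L}_{sup}(\theta)=-\sum_{i=1}^N\log\frac{\exp(s^{\theta}_{ii}/\tau)}{\sum_{j=1}^N\exp(s^{\theta}_{ij}/\tau)},\qquad \mathcal{L}_{soft}(\psi)=-\sum_{i,j=1}^N\hat\Gamma_{ij}\log\frac{\exp(s^{\psi}_{ij}/\tau)}{\sum_{k=1}^N\exp(s^{\psi}_{ik}/\tau)},$$ $$\mathcal{L}_{reg}(\psi)=-\frac1N\sum_{i=1}^N\log\rho_i,\qquad \rho_i=\min_{j\ne i}\|z_i-z_j\|,$$ and $\mathcal{L}_{total}=\mathcal{L}_{sup}+\mathcal{L}_{soft}+\mu\mathcal{L}_{reg}$.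 Consider the IOT problem $$\min_{\theta,\psi}\ J(\theta,\psi)=KL(\Gamma^{g}\|\Gamma^{\theta})+KL(\hat\Gamma\|\Gamma^{\psi})+\mu\,\mathcal{L}_{reg}(\psi),$$ with $\Gamma^{g}_{ij}=\delta_{ij}/N$, $\Gamma^{\theta}=\arg\min_{\Gamma\in U(\frac1N\mathbf 1)}(\langle C^{\theta},\Gamma\rangle-\tau H(\Gamma))$, $\Gamma^{\psi}=\arg\min_{\Gamma\in U(\frac1N\mathbf 1)}(\langle C^{\psi},\Gamma\rangle-\tau H(\Gamma))$, $C^{\theta}_{ij}=c-s^{\theta}_{ij}$, $C^{\psi}_{ij}=c-s^{\psi}_{ij}$, and with $\hat\Gamma$ treated as fixed (independent of $\theta,\psi$). Then $\hat\Gamma$, $\Gamma^\theta$, $\Gamma^\psi$ are well defined (unique), and for all $\theta,\psi$, $$J(\theta,\psi)=\frac1N\mathcal{L}_{sup}(\theta)+\mathcal{L}_{soft}(\psi)+\mu\,\mathcal{L}_{reg}(\psi)+K,\qquad K=\sum_{i,j}\hat\Gamma_{ij}\log\hat\Gamma_{ij}+N\log N-N+1 .$$ Consequently $(\theta^*,\psi^* )$ minimizes $J$ if and only if $\theta^*$ minimizes $\mathcal{L}_{sup}$ and $\psi^*$ minimizes $\mathcal{L}_{soft}+\mu\mathcal{L}_{reg}$, if and only if $(\theta^*,\psi^* )$ minimizes $\mathcal{L}_{total}$; i.e. the optimal parameters of S-MolSearch are exactly the solutions of this IOT problem.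
   Context: For $a,b\in\mathbb{R}^N_{>0}$: $U(a)=\{\Gamma\in\mathbb{R}^{N\times N}_{\ge 0}:\Gamma\mathbf 1_N=a\}$ and $U(a,b)=\{\Gamma\in\mathbb{R}^{N\times N}_{\ge 0}:\Gamma\mathbf 1_N=a,\ \Gamma^{\top}\mathbf 1_N=b\}$, where $\mathbf 1_N$ is the all-ones vector. $\langle A,B\rangle=\sum_{ij}A_{ij}B_{ij}$ and $\|\cdot\|_F$ is the Frobenius norm. $H(\Gamma)=-\sum_{i,j}\Gamma_{ij}(\log\Gamma_{ij}-1)$. The generalized KL divergence is $KL(X\|Y)=\sum_{i,j}\big(X_{ij}\log\frac{X_{ij}}{Y_{ij}}-X_{ij}+Y_{ij}\big)$ with $0\log 0=0$. $\delta_{ij}$ is the Kronecker delta. Positive pairs $(x_i,y_i)$ are embeddings of two molecules that are active on the same protein target; $\mathcal{L}_{reg}$ is the KoLeo regularizer (assume the $z_i$ are pairwise distinct so that it is finite). Minimizers of the loss functions over the parameter spaces are assumed to be understood as global minimizers (the equivalences hold including the case where the minimizer sets are empty). *)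

theory Defs
  imports "HOL-Analysis.Analysis"
begin

text \<open>Indices 1..N are modelled by a finite type 'n with N = CARD('n);
  N x N matrices are functions 'n => 'n => real.\<close>

definition xlogx :: "real \<Rightarrow> real" where
  "xlogx x = (if x = 0 then 0 else x * ln x)"

definition U1 :: "('n::finite \<Rightarrow> real) \<Rightarrow> ('n \<Rightarrow> 'n \<Rightarrow> real) set" where
  "U1 a = {G. (\<forall>i j. G i j \<ge> 0) \<and> (\<forall>i. (\<Sum>j\<in>UNIV. G i j) = a i)}"

definition U2 :: "('n::finite \<Rightarrow> real) \<Rightarrow> ('n \<Rightarrow> real) \<Rightarrow> ('n \<Rightarrow> 'n \<Rightarrow> real) set" where
  "U2 a b = {G. (\<forall>i j. G i j \<ge> 0) \<and> (\<forall>i. (\<Sum>j\<in>UNIV. G i j) = a i)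
                 \<and> (\<forall>j. (\<Sum>i\<in>UNIV. G i j) = b j)}"

definition ones :: "'n::finite \<Rightarrow> real" where "ones = (\<lambda>_. 1)"

definition unif :: "'n::finite \<Rightarrow> real" where "unif = (\<lambda>_. 1 / real CARD('n))"

definition frob_inner :: "('n::finite \<Rightarrow> 'n \<Rightarrow> real) \<Rightarrow> ('n \<Rightarrow> 'n \<Rightarrow> real) \<Rightarrow> real" where
  "frob_inner A B = (\<Sum>i\<in>UNIV. \<Sum>j\<in>UNIV. A i j * B i j)"

definition frob_norm :: "('n::finite \<Rightarrow> 'n \<Rightarrow> real) \<Rightarrow> real" where
  "frob_norm A = sqrt (frob_inner A A)"

definition entropy :: "('n::finite \<Rightarrow> 'n \<Rightarrow> real) \<Rightarrow> real" where
  "entropy G = - (\<Sum>i\<in>UNIV. \<Sum>j\<in>UNIV. xlogx (G i j) - G i j)"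

definition KL :: "('n::finite \<Rightarrow> 'n \<Rightarrow> real) \<Rightarrow> ('n \<Rightarrow> 'n \<Rightarrow> real) \<Rightarrow> real" where
  "KL X Y = (\<Sum>i\<in>UNIV. \<Sum>j\<in>UNIV.
      (if X i j = 0 then 0 else X i j * ln (X i j / Y i j)) - X i j + Y i j)"

definition is_argmin :: "('a \<Rightarrow> real) \<Rightarrow> 'a set \<Rightarrow> 'a \<Rightarrow> bool" where
  "is_argmin f S x \<longleftrightarrow> x \<in> S \<and> (\<forall>y\<in>S. f x \<le> f y)"

definition argmin :: "('a \<Rightarrow> real) \<Rightarrow> 'a set \<Rightarrow> 'a" where
  "argmin f S = (THE x. is_argmin f S x)"

definition is_minimizer :: "('a \<Rightarrow> real) \<Rightarrow> 'a \<Rightarrow> bool" where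
  "is_minimizer f x \<longleftrightarrow> (\<forall>y. f x \<le> f y)"

definition gram :: "('n \<Rightarrow> 'v::real_inner) \<Rightarrow> ('n \<Rightarrow> 'v) \<Rightarrow> 'n \<Rightarrow> 'n \<Rightarrow> real" where
  "gram a b i j = inner (a i) (b j)"

definition cost :: "real \<Rightarrow> ('n \<Rightarrow> 'n \<Rightarrow> real) \<Rightarrow> 'n \<Rightarrow> 'n \<Rightarrow> real" where
  "cost c s i j = c - s i j"

definition quad_obj :: "real \<Rightarrow> ('n::finite \<Rightarrow> 'n \<Rightarrow> real) \<Rightarrow> ('n \<Rightarrow> 'n \<Rightarrow> real) \<Rightarrow> real" where
  "quad_obj lam C G = frob_inner C G + lam / 2 * (frob_norm G)\<^sup>2"

definition ent_obj :: "real \<Rightarrow> ('n::finite \<Rightarrow> 'n \<Rightarrow> real) \<Rightarrow> ('n \<Rightarrow> 'n \<Rightarrow> real) \<Rightarrow> real" where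
  "ent_obj tau C G = frob_inner C G - tau * entropy G"

definition Gamma_hat :: "real \<Rightarrow> real \<Rightarrow> ('n::finite \<Rightarrow> 'v::real_inner) \<Rightarrow> 'n \<Rightarrow> 'n \<Rightarrow> real" where
  "Gamma_hat lam c u = argmin (quad_obj lam (cost c (gram u u))) (U2 ones ones)"

definition Gamma_ent :: "real \<Rightarrow> real \<Rightarrow> ('n::finite \<Rightarrow> 'n \<Rightarrow> real) \<Rightarrow> 'n \<Rightarrow> 'n \<Rightarrow> real" where
  "Gamma_ent tau c s = argmin (ent_obj tau (cost c s)) (U1 unif)"

definition Gamma_g :: "'n::finite \<Rightarrow> 'n \<Rightarrow> real" where
  "Gamma_g i j = (if i = j then 1 / real CARD('n) else 0)"

definition L_sup :: "real \<Rightarrow> ('n::finite \<Rightarrow> 'n \<Rightarrow> real) \<Rightarrow> real" where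
  "L_sup tau s = - (\<Sum>i\<in>UNIV. ln (exp (s i i / tau) / (\<Sum>j\<in>UNIV. exp (s i j / tau))))"

definition L_soft :: "real \<Rightarrow> ('n::finite \<Rightarrow> 'n \<Rightarrow> real) \<Rightarrow> ('n \<Rightarrow> 'n \<Rightarrow> real) \<Rightarrow> real" where
  "L_soft tau G s = - (\<Sum>i\<in>UNIV. \<Sum>j\<in>UNIV.
      G i j * ln (exp (s i j / tau) / (\<Sum>k\<in>UNIV. exp (s i k / tau))))"

definition rho :: "('n::finite \<Rightarrow> 'v::real_normed_vector) \<Rightarrow> 'n \<Rightarrow> real" where
  "rho z i = Min ((\<lambda>j. norm (z i - z j)) ` (UNIV - {i}))"

definition L_reg :: "('n::finite \<Rightarrow> 'v::real_normed_vector) \<Rightarrow> real" where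
  "L_reg z = - (1 / real CARD('n)) * (\<Sum>i\<in>UNIV. ln (rho z i))"

definition J_iot :: "real \<Rightarrow> real \<Rightarrow> real \<Rightarrow> real \<Rightarrow> ('n::finite \<Rightarrow> 'v::real_inner)
    \<Rightarrow> ('n \<Rightarrow> 'v) \<Rightarrow> ('n \<Rightarrow> 'v) \<Rightarrow> ('n \<Rightarrow> 'v) \<Rightarrow> real" where
  "J_iot tau lam mu c u x y z =
     KL Gamma_g (Gamma_ent tau c (gram x y))
   + KL (Gamma_hat lam c u) (Gamma_ent tau c (gram z z))
   + mu * L_reg z"

end

theory Submission
  imports Defs
begin

(* With row marginals a > 0 the entropic objective satisfies, on U(a),
     <C, G> - tau H(G) = <C, P> - tau H(P) + tau KL(G || P),
   where P_ij = a_i softmax_j(s_i. / tau) is the Gibbs plan. Since KL is nonnegative and vanishes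
   only when its arguments agree, P is the unique entropic plan. Substituting it, the divergences
   KL(Gamma_g || Gamma_theta) and KL(Gamma_hat || Gamma_psi) become the two cross-entropy losses up
   to constants, so J separates into a theta-part and a psi-part, and its minimizers are exactly the
   pairs of minimizers of the parts. The soft-label plan exists by compactness of U(1,1) and is
   unique because the quadratic objective is strictly convex. *)

lemma argmin_eqI:
  assumes "is_argmin f S x" and "\<And>y. is_argmin f S y \<Longrightarrow> y = x"
  shows "argmin f S = x"
  unfolding argmin_def using assms by (rule the_equality)

lemma is_argmin_exists:
  fixes f :: "'a::topological_space \<Rightarrow> real"
  assumes "compact S" and "S \<noteq> {}" and "continuous_on S f"
  shows "\<exists>x. is_argmin f S x"
  using continuous_attains_inf[OF assms] unfolding is_argmin_def by blast

lemma double_sum_nonneg_le_0_imp_0: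
  fixes f :: "'a::finite \<Rightarrow> 'b::finite \<Rightarrow> real"
  assumes nonneg: "\<And>i j. 0 \<le> f i j" and le: "(\<Sum>i\<in>UNIV. \<Sum>j\<in>UNIV. f i j) \<le> 0"
  shows "f i j = 0"
proof -
  have row_nonneg: "\<And>i. 0 \<le> (\<Sum>j\<in>UNIV. f i j)"
    by (intro sum_nonneg nonneg)
  then have "(\<Sum>i\<in>UNIV. \<Sum>j\<in>UNIV. f i j) = 0"
    using le by (meson antisym sum_nonneg)
  then have "(\<Sum>j\<in>UNIV. f i j) = 0"
    using row_nonneg by (simp add: sum_nonneg_eq_0_iff)
  then show ?thesis
    using nonneg by (simp add: sum_nonneg_eq_0_iff)
qed

lemma compact_PiE_UNIV:
  fixes K :: "'a \<Rightarrow> 'b::topological_space set"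
  assumes "\<And>i. compact (K i)"
  shows "compact (\<Pi>\<^sub>E i\<in>UNIV. K i)"
proof -
  have "compactin (product_topology (\<lambda>_. euclidean) UNIV) (\<Pi>\<^sub>E i\<in>UNIV. K i)"
    using assms by (simp add: compactin_PiE)
  then show ?thesis
    by (simp add: euclidean_product_topology)
qed

lemma continuous_on_matrix_entry [continuous_intros]:
  "continuous_on S (\<lambda>G :: 'a \<Rightarrow> 'b \<Rightarrow> real. G i j)"
  by (metis continuous_on_subset continuous_on_product_coordinates
      continuous_on_product_then_coordinatewise subset_UNIV)

lemma compact_U1: "compact (U1 a)"
proof -
  have closed: "closed (U1 a)"
    unfolding U1_def
    by (intro closed_Collect_conj closed_Collect_all closed_Collect_le closed_Collect_eq
        continuous_intros)
  have "U1 a \<subseteq> (\<Pi>\<^sub>E i\<in>UNIV. \<Pi>\<^sub>E j\<in>UNIV. {0..a i})"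
  proof
    fix G assume G: "G \<in> U1 a"
    have "G i j \<le> a i" for i j
      using G member_le_sum[of j UNIV "G i"] unfolding U1_def by auto
    then show "G \<in> (\<Pi>\<^sub>E i\<in>UNIV. \<Pi>\<^sub>E j\<in>UNIV. {0..a i})"
      using G unfolding U1_def by auto
  qed
  then have "U1 a = (\<Pi>\<^sub>E i\<in>UNIV. \<Pi>\<^sub>E j\<in>UNIV. {0..a i}) \<inter> U1 a"
    by blast
  also have "compact \<dots>"
    by (intro compact_Int_closed compact_PiE_UNIV compact_Icc closed)
  finally show ?thesis .
qed

lemma compact_U2: "compact (U2 a b)"
proof -
  have "U2 a b = U1 a \<inter> {G. \<forall>j. (\<Sum>i\<in>UNIV. G i j) = b j}"
    unfolding U1_def U2_def by blast
  also have "compact \<dots>"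
    by (intro compact_Int_closed compact_U1 closed_Collect_all closed_Collect_eq continuous_intros)
  finally show ?thesis .
qed

lemma U2_midpoint:
  assumes "G \<in> U2 a b" and "H \<in> U2 a b"
  shows "(\<lambda>i j. (G i j + H i j) / 2) \<in> U2 a b"
  using assms unfolding U2_def by (auto simp: sum_divide_distrib[symmetric] sum.distrib)

lemma quad_obj_eq_sum:
  "quad_obj lam C G = (\<Sum>i\<in>UNIV. \<Sum>j\<in>UNIV. C i j * G i j + lam / 2 * (G i j)\<^sup>2)"
proof -
  have "0 \<le> (\<Sum>i\<in>UNIV. \<Sum>j\<in>UNIV. G i j * G i j)"
    by (intro sum_nonneg) simp
  then show ?thesis
    unfolding quad_obj_def frob_norm_def frob_inner_def
    by (simp add: sum.distrib sum_distrib_left power2_eq_square)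
qed

lemma continuous_on_quad_obj: "continuous_on S (quad_obj lam C)"
  unfolding quad_obj_eq_sum by (intro continuous_intros)

lemma quad_obj_midpoint:
  "quad_obj lam C (\<lambda>i j. (G i j + H i j) / 2)
     = (quad_obj lam C G + quad_obj lam C H) / 2
       - lam / 8 * (\<Sum>i\<in>UNIV. \<Sum>j\<in>UNIV. (G i j - H i j)\<^sup>2)"
proof -
  have "C i j * ((G i j + H i j) / 2) + lam / 2 * ((G i j + H i j) / 2)\<^sup>2
      = ((C i j * G i j + lam / 2 * (G i j)\<^sup>2) + (C i j * H i j + lam / 2 * (H i j)\<^sup>2)) / 2
        - lam / 8 * (G i j - H i j)\<^sup>2" for i j
    by (simp add: power2_eq_square field_simps)
  then show ?thesis
    unfolding quad_obj_eq_sum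
    by (simp add: sum_subtractf sum.distrib sum_divide_distrib[symmetric] sum_distrib_left)
qed

lemma is_argmin_quad_obj_unique:
  assumes lam: "lam > 0"
    and midpoint: "\<And>G H. G \<in> S \<Longrightarrow> H \<in> S \<Longrightarrow> (\<lambda>i j. (G i j + H i j) / 2) \<in> S"
    and G: "is_argmin (quad_obj lam C) S G" and H: "is_argmin (quad_obj lam C) S H"
  shows "G = H"
proof -
  let ?M = "\<lambda>i j. (G i j + H i j) / 2"
  have "quad_obj lam C G \<le> quad_obj lam C ?M" "quad_obj lam C H \<le> quad_obj lam C ?M"
    using G H midpoint unfolding is_argmin_def by auto
  then have "lam / 8 * (\<Sum>i\<in>UNIV. \<Sum>j\<in>UNIV. (G i j - H i j)\<^sup>2) \<le> 0"
    unfolding quad_obj_midpoint by argo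
  then have "(\<Sum>i\<in>UNIV. \<Sum>j\<in>UNIV. (G i j - H i j)\<^sup>2) \<le> 0"
    using lam by (simp add: mult_le_0_iff)
  then have "(G i j - H i j)\<^sup>2 = 0" for i j
    by (rule double_sum_nonneg_le_0_imp_0[rotated]) simp
  then show ?thesis
    by (auto intro!: ext)
qed

lemma ex1_argmin_quad_obj_U2:
  fixes C :: "'n::finite \<Rightarrow> 'n \<Rightarrow> real"
  assumes "lam > 0"
  shows "\<exists>!G. is_argmin (quad_obj lam C) (U2 ones ones) G"
proof -
  have "(\<lambda>i j. if i = j then 1 else 0) \<in> U2 (ones :: 'n \<Rightarrow> real) ones"
    unfolding U2_def ones_def by auto
  then have "\<exists>G. is_argmin (quad_obj lam C) (U2 ones ones) G"
    by (intro is_argmin_exists compact_U2 continuous_on_quad_obj) auto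
  then show ?thesis
    using is_argmin_quad_obj_unique[OF assms U2_midpoint] by blast
qed

definition bregman_xlogx :: "real \<Rightarrow> real \<Rightarrow> real" where
  "bregman_xlogx x y = xlogx x - x * ln y - x + y"

lemma bregman_xlogx_nonneg_and_eq_0:
  assumes x: "0 \<le> x" and y: "0 < y"
  shows "0 \<le> bregman_xlogx x y \<and> (bregman_xlogx x y = 0 \<longrightarrow> x = y)"
proof (cases "x = 0")
  case True
  then show ?thesis using y by (simp add: bregman_xlogx_def xlogx_def)
next
  case False
  with x have x_pos: "0 < x" by simp
  then have ratio_pos: "0 < y / x" using y by simp
  have eq: "bregman_xlogx x y = x * ((y / x - 1) - ln (y / x))"
    using x_pos y by (simp add: bregman_xlogx_def xlogx_def ln_div field_simps)
  have "ln (y / x) \<le> y / x - 1"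
    using ratio_pos by (rule ln_le_minus_one)
  moreover have "x = y" if "ln (y / x) = y / x - 1"
    using ln_eq_minus_one[OF ratio_pos that] x_pos by simp
  ultimately show ?thesis
    unfolding eq using x_pos by (auto simp: mult_le_0_iff)
qed

lemma bregman_xlogx_nonneg: "0 \<le> x \<Longrightarrow> 0 < y \<Longrightarrow> 0 \<le> bregman_xlogx x y"
  using bregman_xlogx_nonneg_and_eq_0 by blast

lemma bregman_xlogx_eq_0_iff: "0 \<le> x \<Longrightarrow> 0 < y \<Longrightarrow> bregman_xlogx x y = 0 \<longleftrightarrow> x = y"
  using bregman_xlogx_nonneg_and_eq_0[of x y] by (auto simp: bregman_xlogx_def xlogx_def)

lemma KL_eq_sum_bregman_xlogx:
  assumes "\<And>i j. 0 \<le> X i j" and "\<And>i j. 0 < Y i j"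
  shows "KL X Y = (\<Sum>i\<in>UNIV. \<Sum>j\<in>UNIV. bregman_xlogx (X i j) (Y i j))"
proof -
  have "(if X i j = 0 then 0 else X i j * ln (X i j / Y i j)) = xlogx (X i j) - X i j * ln (Y i j)"
    for i j
    using assms[of i j] by (simp add: xlogx_def ln_div right_diff_distrib)
  then show ?thesis
    unfolding KL_def bregman_xlogx_def by simp
qed

lemma KL_self: "KL X X = 0"
  unfolding KL_def by (auto intro!: sum.neutral)

lemma KL_nonneg: "(\<And>i j. 0 \<le> X i j) \<Longrightarrow> (\<And>i j. 0 < Y i j) \<Longrightarrow> 0 \<le> KL X Y"
  by (simp add: KL_eq_sum_bregman_xlogx sum_nonneg bregman_xlogx_nonneg)

lemma KL_le_0_imp_eq:
  assumes X: "\<And>i j. 0 \<le> X i j" and Y: "\<And>i j. 0 < Y i j" and "KL X Y \<le> 0"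
  shows "X = Y"
proof (intro ext)
  fix i j
  have "bregman_xlogx (X i j) (Y i j) = 0"
    using assms by (intro double_sum_nonneg_le_0_imp_0 bregman_xlogx_nonneg)
      (simp_all add: KL_eq_sum_bregman_xlogx)
  then show "X i j = Y i j"
    using X Y bregman_xlogx_eq_0_iff by blast
qed

definition softmax :: "real \<Rightarrow> ('n::finite \<Rightarrow> 'n \<Rightarrow> real) \<Rightarrow> 'n \<Rightarrow> 'n \<Rightarrow> real" where
  "softmax tau s i j = exp (s i j / tau) / (\<Sum>k\<in>UNIV. exp (s i k / tau))"

definition gibbs_plan :: "real \<Rightarrow> ('n::finite \<Rightarrow> real) \<Rightarrow> ('n \<Rightarrow> 'n \<Rightarrow> real) \<Rightarrow> 'n \<Rightarrow> 'n \<Rightarrow> real"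
  where "gibbs_plan tau a s i j = a i * softmax tau s i j"

lemma partition_function_pos: "0 < (\<Sum>k\<in>(UNIV::'n::finite set). exp (f k :: real))"
  by (rule sum_pos) auto

lemma softmax_pos: "0 < softmax tau s i j"
  unfolding softmax_def using partition_function_pos[of "\<lambda>k. s i k / tau"] by simp

lemma sum_softmax: "(\<Sum>j\<in>UNIV. softmax tau s i j) = 1"
  unfolding softmax_def sum_divide_distrib[symmetric]
  using partition_function_pos[of "\<lambda>k. s i k / tau"] by simp

lemma ln_softmax: "ln (softmax tau s i j) = s i j / tau - ln (\<Sum>k\<in>UNIV. exp (s i k / tau))"
  unfolding softmax_def using partition_function_pos[of "\<lambda>k. s i k / tau"] by (simp add: ln_div)

lemma gibbs_plan_pos: "0 < a i \<Longrightarrow> 0 < gibbs_plan tau a s i j"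
  unfolding gibbs_plan_def by (intro mult_pos_pos softmax_pos)

lemma sum_gibbs_plan: "(\<Sum>j\<in>UNIV. gibbs_plan tau a s i j) = a i"
  unfolding gibbs_plan_def by (simp add: sum_distrib_left[symmetric] sum_softmax)

lemma gibbs_plan_in_U1: "(\<And>i. 0 < a i) \<Longrightarrow> gibbs_plan tau a s \<in> U1 a"
  unfolding U1_def by (simp add: sum_gibbs_plan less_imp_le[OF gibbs_plan_pos])

lemma ent_obj_eq_gibbs_plan_plus_KL:
  assumes tau: "tau > 0" and a: "\<And>i. 0 < a i" and G: "G \<in> U1 a"
  shows "ent_obj tau (cost c s) G
    = ent_obj tau (cost c s) (gibbs_plan tau a s) + tau * KL G (gibbs_plan tau a s)"
proof -
  let ?g = "gibbs_plan tau a s"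
  define b where "b i = c + tau * ln (a i) - tau * ln (\<Sum>k\<in>UNIV. exp (s i k / tau)) - tau" for i
  have decomp: "ent_obj tau (cost c s) H = tau * KL H ?g + (\<Sum>i\<in>UNIV. a i * b i)"
    if H: "H \<in> U1 a" for H
  proof -
    have H_nonneg: "\<And>i j. 0 \<le> H i j" and H_rows: "\<And>i. (\<Sum>j\<in>UNIV. H i j) = a i"
      using H unfolding U1_def by auto
    have "cost c s i j * H i j + tau * (xlogx (H i j) - H i j)
        = tau * bregman_xlogx (H i j) (?g i j) + (b i + tau) * H i j - tau * ?g i j" for i j
    proof -
      have ln_g: "ln (?g i j) = ln (a i) + s i j / tau - ln (\<Sum>k\<in>UNIV. exp (s i k / tau))"
        using a[of i] softmax_pos[of tau s i j] by (simp add: gibbs_plan_def ln_mult ln_softmax)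
      show ?thesis
        unfolding bregman_xlogx_def ln_g cost_def b_def using tau by (simp add: field_simps)
    qed
    note pointwise = this
    have "ent_obj tau (cost c s) H
        = (\<Sum>i\<in>UNIV. \<Sum>j\<in>UNIV. cost c s i j * H i j + tau * (xlogx (H i j) - H i j))"
      unfolding ent_obj_def frob_inner_def entropy_def
      by (simp add: sum.distrib sum_distrib_left)
    also have "\<dots> = (\<Sum>i\<in>UNIV. \<Sum>j\<in>UNIV.
        tau * bregman_xlogx (H i j) (?g i j) + (b i + tau) * H i j - tau * ?g i j)"
      unfolding pointwise ..
    also have "\<dots> = tau * (\<Sum>i\<in>UNIV. \<Sum>j\<in>UNIV. bregman_xlogx (H i j) (?g i j))
        + (\<Sum>i\<in>UNIV. (b i + tau) * (\<Sum>j\<in>UNIV. H i j) - tau * (\<Sum>j\<in>UNIV. ?g i j))"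
      by (simp add: sum.distrib sum_subtractf sum_distrib_left)
    also have "\<dots> = tau * KL H ?g + (\<Sum>i\<in>UNIV. a i * b i)"
      unfolding H_rows sum_gibbs_plan
      by (simp add: KL_eq_sum_bregman_xlogx H_nonneg gibbs_plan_pos a algebra_simps)
    finally show ?thesis .
  qed
  show ?thesis
    using decomp[OF G] decomp[OF gibbs_plan_in_U1[OF a]] by (simp add: KL_self)
qed

lemma is_argmin_ent_obj_iff:
  assumes tau: "tau > 0" and a: "\<And>i. 0 < a i"
  shows "is_argmin (ent_obj tau (cost c s)) (U1 a) G \<longleftrightarrow> G = gibbs_plan tau a s"
proof
  let ?g = "gibbs_plan tau a s"
  have g: "?g \<in> U1 a"
    using a by (rule gibbs_plan_in_U1)
  have KL_nonneg_g: "0 \<le> KL H ?g" if "H \<in> U1 a" for H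
    using that gibbs_plan_pos[OF a] unfolding U1_def by (intro KL_nonneg) auto
  show "G = ?g" if "is_argmin (ent_obj tau (cost c s)) (U1 a) G"
  proof -
    from that have G: "G \<in> U1 a" and "ent_obj tau (cost c s) G \<le> ent_obj tau (cost c s) ?g"
      using g unfolding is_argmin_def by auto
    then have "tau * KL G ?g \<le> 0"
      using ent_obj_eq_gibbs_plan_plus_KL[OF tau a G, of c s] by linarith
    then have "KL G ?g \<le> 0"
      using tau by (simp add: mult_le_0_iff)
    then show ?thesis
      using G gibbs_plan_pos[OF a] unfolding U1_def by (intro KL_le_0_imp_eq) auto
  qed
  show "is_argmin (ent_obj tau (cost c s)) (U1 a) G" if "G = ?g"
  proof -
    have "ent_obj tau (cost c s) ?g \<le> ent_obj tau (cost c s) H" if H: "H \<in> U1 a" for H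
      using ent_obj_eq_gibbs_plan_plus_KL[OF tau a H, of c s] KL_nonneg_g[OF H] tau by simp
    then show ?thesis
      unfolding is_argmin_def using g \<open>G = ?g\<close> by blast
  qed
qed

lemma Gamma_ent_eq_gibbs_plan:
  assumes "tau > 0"
  shows "Gamma_ent tau c s = gibbs_plan tau unif s"
  unfolding Gamma_ent_def
  using is_argmin_ent_obj_iff[OF assms, of unif] by (intro argmin_eqI) (auto simp: unif_def)

lemma KL_gibbs_plan_unif:
  fixes X :: "'n::finite \<Rightarrow> 'n \<Rightarrow> real"
  assumes X: "\<And>i j. 0 \<le> X i j"
  shows "KL X (gibbs_plan tau unif s)
    = (\<Sum>i\<in>UNIV. \<Sum>j\<in>UNIV. xlogx (X i j))
      + (ln (real CARD('n)) - 1) * (\<Sum>i\<in>UNIV. \<Sum>j\<in>UNIV. X i j) + 1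
      - (\<Sum>i\<in>UNIV. \<Sum>j\<in>UNIV. X i j * ln (softmax tau s i j))"
proof -
  define N where "N = real CARD('n)"
  have N: "0 < N" unfolding N_def by simp
  have "bregman_xlogx (X i j) (gibbs_plan tau unif s i j)
      = xlogx (X i j) + (ln N - 1) * X i j - X i j * ln (softmax tau s i j)
        + gibbs_plan tau unif s i j" for i j
    using N softmax_pos[of tau s i j]
    by (simp add: bregman_xlogx_def gibbs_plan_def unif_def N_def ln_mult ln_div algebra_simps)
  moreover have "(\<Sum>i\<in>UNIV. \<Sum>j\<in>UNIV. gibbs_plan tau unif s i j) = 1"
    using N by (simp add: sum_gibbs_plan unif_def N_def)
  ultimately show ?thesis
    using X N unfolding N_def
    by (simp add: KL_eq_sum_bregman_xlogx gibbs_plan_pos unif_def sum.distrib sum_subtractf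
        sum_distrib_left)
qed

lemma Gamma_g_nonneg: "0 \<le> Gamma_g i j"
  unfolding Gamma_g_def by simp

lemma KL_Gamma_g_gibbs_plan_unif:
  fixes s :: "'n::finite \<Rightarrow> 'n \<Rightarrow> real"
  shows "KL Gamma_g (gibbs_plan tau unif s) = (1 / real CARD('n)) * L_sup tau s"
proof -
  define N where "N = real CARD('n)"
  have N: "0 < N" unfolding N_def by simp
  have diag: "Gamma_g i j = (if j = i then 1 / N else 0)" for i j :: 'n
    unfolding Gamma_g_def N_def by auto
  have "xlogx (Gamma_g i j) = (if j = i then - ln N / N else 0)" for i j :: 'n
    using N by (simp add: diag xlogx_def ln_div)
  then have "(\<Sum>i\<in>UNIV. \<Sum>j\<in>UNIV. xlogx (Gamma_g i (j :: 'n))) = - ln N"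
    using N by (simp add: N_def)
  moreover have "(\<Sum>i\<in>UNIV. \<Sum>j\<in>UNIV. Gamma_g i (j :: 'n)) = 1"
    using N by (simp add: diag N_def)
  moreover have "(\<Sum>i\<in>UNIV. \<Sum>j\<in>UNIV. Gamma_g i j * ln (softmax tau s i j)) = - L_sup tau s / N"
  proof -
    have "Gamma_g i j * y = (if j = i then y / N else 0)" for i j :: 'n and y
      by (simp add: diag)
    then show ?thesis
      by (simp add: L_sup_def softmax_def sum_divide_distrib)
  qed
  ultimately show ?thesis
    unfolding KL_gibbs_plan_unif[OF Gamma_g_nonneg] N_def by simp
qed

lemma KL_U1_ones_gibbs_plan_unif:
  fixes G :: "'n::finite \<Rightarrow> 'n \<Rightarrow> real"
  assumes G: "G \<in> U1 ones"
  shows "KL G (gibbs_plan tau unif s) = (\<Sum>i\<in>UNIV. \<Sum>j\<in>UNIV. xlogx (G i j))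
     + real CARD('n) * ln (real CARD('n)) - real CARD('n) + 1 + L_soft tau G s"
proof -
  have "(\<Sum>i\<in>UNIV. \<Sum>j\<in>UNIV. G i j) = real CARD('n)"
    using G unfolding U1_def ones_def by simp
  moreover have "0 \<le> G i j" for i j
    using G unfolding U1_def by blast
  ultimately show ?thesis
    by (simp add: KL_gibbs_plan_unif L_soft_def softmax_def algebra_simps)
qed

lemma is_minimizer_split:
  assumes "\<And>a b. h (a, b) = f a + (g b :: real)"
  shows "is_minimizer h (x, y) \<longleftrightarrow> is_minimizer f x \<and> is_minimizer g y"
  unfolding is_minimizer_def
proof safe
  fix a assume "\<forall>p. h (x, y) \<le> h p"
  from this[rule_format, of "(a, y)"] show "f x \<le> f a" using assms by simp
next
  fix b assume "\<forall>p. h (x, y) \<le> h p"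
  from this[rule_format, of "(x, b)"] show "g y \<le> g b" using assms by simp
next
  fix p assume "\<forall>a. f x \<le> f a" "\<forall>b. g y \<le> g b"
  then show "h (x, y) \<le> h p" using assms by (cases p) (simp add: add_mono)
qed

lemma is_minimizer_affine:
  assumes "k > 0"
  shows "is_minimizer (\<lambda>x. k * f x + (d :: real)) x \<longleftrightarrow> is_minimizer f x"
  unfolding is_minimizer_def using assms by simp

lemma is_minimizer_split_affine:
  assumes "\<And>a b. h (a, b) = (k * f a + d) + (g b :: real)" and "k > 0"
  shows "is_minimizer h (x, y) \<longleftrightarrow> is_minimizer f x \<and> is_minimizer g y"
  using is_minimizer_split[where f = "\<lambda>a. k * f a + d" and g = g, OF assms(1)]
    is_minimizer_affine[OF assms(2), of f d x] by simp

theorem proposition2: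
  fixes X Y :: "'p \<Rightarrow> 'n::finite \<Rightarrow> 'v::real_inner"
    and Z :: "'q \<Rightarrow> 'n \<Rightarrow> 'v"
    and u :: "'n \<Rightarrow> 'v"
    and tau lam mu c :: real
  assumes N2: "CARD('n) \<ge> 2"
    and tau: "tau > 0" and lam: "lam > 0" and mu: "mu \<ge> 0"
    and unitX: "\<And>\<theta> i. norm (X \<theta> i) = 1"
    and unitY: "\<And>\<theta> i. norm (Y \<theta> i) = 1"
    and unitZ: "\<And>\<psi> i. norm (Z \<psi> i) = 1"
    and unitu: "\<And>i. norm (u i) = 1"
    and distinctZ: "\<And>\<psi>. inj (Z \<psi>)"
  defines "J \<equiv> (\<lambda>(\<theta>, \<psi>). J_iot tau lam mu c u (X \<theta>) (Y \<theta>) (Z \<psi>))"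
    and "Lsup \<equiv> (\<lambda>\<theta>. L_sup tau (gram (X \<theta>) (Y \<theta>)))"
    and "Lsoft \<equiv> (\<lambda>\<psi>. L_soft tau (Gamma_hat lam c u) (gram (Z \<psi>) (Z \<psi>)))"
    and "Lreg \<equiv> (\<lambda>\<psi>. L_reg (Z \<psi>))"
    and "K \<equiv> (\<Sum>i\<in>UNIV. \<Sum>j\<in>UNIV. xlogx (Gamma_hat lam c u i j))
             + real CARD('n) * ln (real CARD('n)) - real CARD('n) + 1"
  shows "(\<exists>!G. is_argmin (quad_obj lam (cost c (gram u u))) (U2 ones ones) G)
    \<and> (\<forall>\<theta>. \<exists>!G. is_argmin (ent_obj tau (cost c (gram (X \<theta>) (Y \<theta>)))) (U1 unif) G)
    \<and> (\<forall>\<psi>. \<exists>!G. is_argmin (ent_obj tau (cost c (gram (Z \<psi>) (Z \<psi>)))) (U1 unif) G)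
    \<and> (\<forall>\<theta> \<psi>. J (\<theta>, \<psi>) = (1 / real CARD('n)) * Lsup \<theta> + Lsoft \<psi> + mu * Lreg \<psi> + K)
    \<and> (\<forall>\<theta>s \<psi>s.
         (is_minimizer J (\<theta>s, \<psi>s) \<longleftrightarrow>
            is_minimizer Lsup \<theta>s \<and> is_minimizer (\<lambda>\<psi>. Lsoft \<psi> + mu * Lreg \<psi>) \<psi>s)
       \<and> (is_minimizer J (\<theta>s, \<psi>s) \<longleftrightarrow>
            is_minimizer (\<lambda>(\<theta>, \<psi>). Lsup \<theta> + Lsoft \<psi> + mu * Lreg \<psi>) (\<theta>s, \<psi>s)))"
proof -
  have ex1_hat: "\<exists>!G. is_argmin (quad_obj lam (cost c (gram u u))) (U2 ones ones) G"
    using lam by (rule ex1_argmin_quad_obj_U2)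
  have "is_argmin (quad_obj lam (cost c (gram u u))) (U2 ones ones) (Gamma_hat lam c u)"
    unfolding Gamma_hat_def argmin_def by (rule theI'[OF ex1_hat])
  then have hat_U1: "Gamma_hat lam c u \<in> U1 ones"
    unfolding is_argmin_def U1_def U2_def by blast
  have unif_pos: "0 < unif i" for i :: 'n
    unfolding unif_def by simp
  have ex1_ent: "\<exists>!G. is_argmin (ent_obj tau (cost c s)) (U1 unif) G" for s :: "'n \<Rightarrow> 'n \<Rightarrow> real"
    by (simp add: is_argmin_ent_obj_iff[OF tau unif_pos])
  have J_eq: "J (\<theta>, \<psi>) = (1 / real CARD('n)) * Lsup \<theta> + Lsoft \<psi> + mu * Lreg \<psi> + K" for \<theta> \<psi>
    unfolding J_def J_iot_def Gamma_ent_eq_gibbs_plan[OF tau] KL_Gamma_g_gibbs_plan_unif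
      KL_U1_ones_gibbs_plan_unif[OF hat_U1] Lsup_def Lsoft_def Lreg_def K_def
    by simp
  have min_J: "is_minimizer J (\<theta>s, \<psi>s) \<longleftrightarrow>
      is_minimizer Lsup \<theta>s \<and> is_minimizer (\<lambda>\<psi>. Lsoft \<psi> + mu * Lreg \<psi>) \<psi>s" for \<theta>s \<psi>s
    by (rule is_minimizer_split_affine[where k = "1 / real CARD('n)" and d = K]) (simp_all add: J_eq)
  have min_total: "is_minimizer (\<lambda>(\<theta>, \<psi>). Lsup \<theta> + Lsoft \<psi> + mu * Lreg \<psi>) (\<theta>s, \<psi>s) \<longleftrightarrow>
      is_minimizer Lsup \<theta>s \<and> is_minimizer (\<lambda>\<psi>. Lsoft \<psi> + mu * Lreg \<psi>) \<psi>s" for \<theta>s \<psi>s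
    by (rule is_minimizer_split_affine[where k = 1 and d = 0]) simp_all
  show ?thesis
    by (intro conjI allI ex1_hat ex1_ent J_eq iffI) (simp_all add: min_J min_total)
qed

end
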